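(* For $a\in\mathbb R\setminus\{0,1\}$, let $\mathfrak g_a$ be the $7$-dimensional nilpotent Lie algebra with basis $\{e_1,\dots,e_7\}$ and dual basis $\{e^1,\dots,e^7\}$ satisfying $$de^1=de^2=0,\ de^3=(1-a)e^{12},\ de^4=e^{13},\ de^5=ae^{14}+e^{23},\ de^6=e^{15}+e^{24},\ de^7=e^{16}+e^{25}+e^{34}.$$ Let $\beta=\frac18\sqrt{123\sqrt{41}-767}$. Then the set $\mathbf S$ of signatures of diagonal metrics on $\mathfrak g_a$ satisfying $\operatorname{Ric}=-\frac12\mathrm{id}+\frac12N$ is: for $a<\frac12-\beta$: $\{\emptyset,12457,1345,1357,234,47\}$; for $\frac12-\beta\le a<0$: $\{\emptyset,12457,125,1345,1357,234,237,47\}$; for $0<a<\frac12$: $\{\emptyset,12457,125,146,1345,1357,234,237,34567,47\}$; for $a=\frac12$: $\{\emptyset,12457,125,1357,146,234,237,34567\}$; for $\frac12<a<1$: $\{\emptyset,123467,12457,125,1357,146,234,237,2456,34567\}$; for $1<a\le\frac12+\beta$: $\{\emptyset,123467,125,1357,146,237,2456,34567\}$; for $\frac12+\beta<a$: $\{\emptyset,123467,1357,146,2456,34567\}$.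
   Context: $d$ is the Chevalley–Eilenberg differential and $e^{ij}=e^i\wedge e^j$; the basis $\{e_i\}$ is a nice basis (each $[e_i,e_j]$ is a multiple of some $e_k$ and each $e_i\lrcorner de^j$ a multiple of some $e^k$). The root matrix $M_\Delta$ has one row for each triple $(\{i,j\},k)$ with $[e_i,e_j]$ a nonzero multiple of $e_k$, with $+1$ in position $k$, $-1$ in positions $i,j$, $0$ elsewhere. $N$ is the diagonal Nikolayevsky derivation: the diagonal matrix (in the basis $\{e_i\}$) with diagonal $M_\Delta^Tb+[1]$, where $b$ solves $M_\Delta M_\Delta^Tb=[1]$ and $[1]$ is the all-ones vector. A diagonal metric is $\sum_i g_ie^i\otimes e^i$ with $g_i\neq0$, and $\operatorname{Ric}$ is its Ricci operator. A signature is recorded as the string of indices $i$ with $g_i<0$ (e.g. $1357$ means $g_1,g_3,g_5,g_7<0$ and the other $g_i>0$); $\emptyset$ denotes the positive definite signature. *)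

theory Defs
  imports Complex_Main
begin

text \<open>A Lie algebra with basis e_1..e_n is encoded by structure constants
  c i j k = coefficient of e_k in [e_i,e_j]. All indices range over {1..n}.\<close>

text \<open>Bracket from the Chevalley-Eilenberg differential: D k i j (for i<j) is the
  coefficient of e^{ij} in de^k; with the convention de^k(X,Y) = - e^k([X,Y]),
  [e_i,e_j] = - sum_k D k i j e_k for i<j (antisymmetric extension).\<close>
definition bracket_of_d :: "(nat \<Rightarrow> nat \<Rightarrow> nat \<Rightarrow> real) \<Rightarrow> nat \<Rightarrow> nat \<Rightarrow> nat \<Rightarrow> real" where
  "bracket_of_d D i j k = (if i < j then - D k i j else if j < i then D k j i else 0)"

definition ga_d :: "real \<Rightarrow> nat \<Rightarrow> nat \<Rightarrow> nat \<Rightarrow> real" where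
  "ga_d a k i j =
     (if (k,i,j) = (3,1,2) then 1 - a
      else if (k,i,j) = (4,1,3) then 1
      else if (k,i,j) = (5,1,4) then a
      else if (k,i,j) = (5,2,3) then 1
      else if (k,i,j) = (6,1,5) then 1
      else if (k,i,j) = (6,2,4) then 1
      else if (k,i,j) = (7,1,6) then 1
      else if (k,i,j) = (7,2,5) then 1
      else if (k,i,j) = (7,3,4) then 1
      else 0)"

definition ga_bracket :: "real \<Rightarrow> nat \<Rightarrow> nat \<Rightarrow> nat \<Rightarrow> real" where
  "ga_bracket a = bracket_of_d (ga_d a)"

text \<open>Levi-Civita connection of the left-invariant diagonal metric sum g_i e^i (x) e^i
  (Koszul formula): LC_coef n c g i j k = coefficient of e_k in nabla_{e_i} e_j.\<close>
definition LC_coef :: "(nat \<Rightarrow> nat \<Rightarrow> nat \<Rightarrow> real) \<Rightarrow> (nat \<Rightarrow> real) \<Rightarrow> nat \<Rightarrow> nat \<Rightarrow> nat \<Rightarrow> real" where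
  "LC_coef c g i j k = (c i j k * g k - c j k i * g i + c k i j * g j) / (2 * g k)"

text \<open>Curvature R(X,Y) = nabla_X nabla_Y - nabla_Y nabla_X - nabla_[X,Y];
  curv_coef n c g i j l p = coefficient of e_p in R(e_i,e_j) e_l.\<close>
definition curv_coef :: "nat \<Rightarrow> (nat \<Rightarrow> nat \<Rightarrow> nat \<Rightarrow> real) \<Rightarrow> (nat \<Rightarrow> real) \<Rightarrow> nat \<Rightarrow> nat \<Rightarrow> nat \<Rightarrow> nat \<Rightarrow> real" where
  "curv_coef n c g i j l p =
     (\<Sum>m\<in>{1..n}. LC_coef c g j l m * LC_coef c g i m p)
   - (\<Sum>m\<in>{1..n}. LC_coef c g i l m * LC_coef c g j m p)
   - (\<Sum>m\<in>{1..n}. c i j m * LC_coef c g m l p)"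

definition ric_tensor :: "nat \<Rightarrow> (nat \<Rightarrow> nat \<Rightarrow> nat \<Rightarrow> real) \<Rightarrow> (nat \<Rightarrow> real) \<Rightarrow> nat \<Rightarrow> nat \<Rightarrow> real" where
  "ric_tensor n c g j l = (\<Sum>i\<in>{1..n}. curv_coef n c g i j l i)"

text \<open>Ricci operator, g(Ric Y, Z) = ric(Y,Z): ricci_op n c g k j = coefficient of e_k in Ric e_j.\<close>
definition ricci_op :: "nat \<Rightarrow> (nat \<Rightarrow> nat \<Rightarrow> nat \<Rightarrow> real) \<Rightarrow> (nat \<Rightarrow> real) \<Rightarrow> nat \<Rightarrow> nat \<Rightarrow> real" where
  "ricci_op n c g k j = ric_tensor n c g j k / g k"

text \<open>Root matrix: one row per triple ({i,j},k) (represented with i<j) such that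
  [e_i,e_j] is a nonzero multiple of e_k.\<close>
definition root_triples :: "nat \<Rightarrow> (nat \<Rightarrow> nat \<Rightarrow> nat \<Rightarrow> real) \<Rightarrow> (nat \<times> nat \<times> nat) set" where
  "root_triples n c = {(i,j,k). 1 \<le> i \<and> i < j \<and> j \<le> n \<and> k \<in> {1..n} \<and> c i j k \<noteq> 0}"

definition root_row :: "nat \<times> nat \<times> nat \<Rightarrow> nat \<Rightarrow> real" where
  "root_row r m = (case r of (i,j,k) \<Rightarrow>
      (if m = k then 1 else 0) - (if m = i then 1 else 0) - (if m = j then 1 else 0))"

text \<open>Diagonal entries of the Nikolayevsky derivation: M^T b + [1] where M M^T b = [1].\<close>
definition nik_diag :: "nat \<Rightarrow> (nat \<Rightarrow> nat \<Rightarrow> nat \<Rightarrow> real) \<Rightarrow> nat \<Rightarrow> real" where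
  "nik_diag n c =
     (let D = root_triples n c;
          b = (SOME b :: nat \<times> nat \<times> nat \<Rightarrow> real. \<forall>r\<in>D.
                 (\<Sum>s\<in>D. (\<Sum>m\<in>{1..n}. root_row r m * root_row s m) * b s) = 1)
      in (\<lambda>m. (\<Sum>r\<in>D. b r * root_row r m) + 1))"

definition ric_condition :: "nat \<Rightarrow> (nat \<Rightarrow> nat \<Rightarrow> nat \<Rightarrow> real) \<Rightarrow> (nat \<Rightarrow> real) \<Rightarrow> bool" where
  "ric_condition n c g \<longleftrightarrow>
     (\<forall>i\<in>{1..n}. g i \<noteq> 0) \<and>
     (\<forall>j\<in>{1..n}. \<forall>k\<in>{1..n}.
        ricci_op n c g k j = (if k = j then - 1/2 + 1/2 * nik_diag n c k else 0))"

definition signature :: "nat \<Rightarrow> (nat \<Rightarrow> real) \<Rightarrow> nat set" where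
  "signature n g = {i\<in>{1..n}. g i < 0}"

definition sig_set :: "nat \<Rightarrow> (nat \<Rightarrow> nat \<Rightarrow> nat \<Rightarrow> real) \<Rightarrow> nat set set" where
  "sig_set n c = {signature n g | g. ric_condition n c g}"

end

theory Submission
  imports Defs
begin

text \<open>For a diagonal metric \<open>g\<close> the Ricci operator of \<open>\<g>\<^sub>a\<close> is diagonal and equals
  \<open>M\<^sub>\<Delta>\<^sup>T w / 2\<close>, where \<open>w\<close> gives each of the nine roots \<open>(i,j,k)\<close> the weight
  \<open>c\<^sup>2 g\<^sub>k / (g\<^sub>i g\<^sub>j)\<close>, \<open>c\<close> the structure constant; moreover \<open>N = diag(1,\<dots>,7)/5\<close>.
  So \<open>Ric = -id/2 + N/2\<close> becomes a linear system for the nine weights, together with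
  the three product relations satisfied by the weights of any metric; conversely every nonzero
  solution is the weight vector of a metric, with either sign of \<open>g\<^sub>1\<close>.

  Eliminating, \<open>v = w(1,3,4)\<close> determines everything except the split of
  \<open>W = (v - 4/25)/v\<close> into \<open>w(1,2,3) + w(1,4,5)\<close>, which is in the ratio \<open>(1-a) : a\<close> or
  \<open>(1-a) : -a\<close>, and then \<open>v \<noteq> 0\<close> is a root of
  \<open>(v - 4/25)\<^sup>2 = k (2/5 - v)\<^sup>2 (4/25 - 3v/5)\<close> with \<open>k = 1\<close> resp. \<open>k = (1-2a)\<^sup>2\<close>
  (for \<open>a = 1/2\<close> the second split degenerates to \<open>W = 0\<close>). For \<open>k = 1\<close> the roots are \<open>1/5\<close>
  and \<open>-4/5\<close>; for \<open>k = (1-2a)\<^sup>2\<close> there is always a root in \<open>(4/25, 4/15)\<close>, there is one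
  in \<open>(0, 4/25)\<close> iff \<open>k < 1\<close>, and a negative one iff \<open>k \<le> (2\<beta>)\<^sup>2\<close>. The signature is
  determined by the sign of \<open>g\<^sub>1\<close> and the signs of the weights, which yields the lists.\<close>

section \<open>The Ricci operator of diagonal metrics on \<open>\<g>\<^sub>a\<close>\<close>

definition ga_roots :: "(nat \<times> nat \<times> nat) set" where
  "ga_roots = {(1,2,3), (1,3,4), (1,4,5), (2,3,5), (1,5,6), (2,4,6), (1,6,7), (2,5,7), (3,4,7)}"

definition ga_weight :: "real \<Rightarrow> (nat \<Rightarrow> real) \<Rightarrow> nat \<times> nat \<times> nat \<Rightarrow> real" where
  "ga_weight a g r = (case r of (i, j, k) \<Rightarrow> (ga_d a k i j)^2 * g k / (g i * g j))"

lemma atLeastAtMost_1_7: "{1..7::nat} = {1,2,3,4,5,6,7}" by auto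

lemma ricci_op_ga_diag:
  assumes g: "\<forall>i\<in>{1..7}. g i \<noteq> 0" and k: "k \<in> {1..7}"
  shows "ricci_op 7 (ga_bracket a) g k k = (\<Sum>r\<in>ga_roots. ga_weight a g r * root_row r k) / 2"
proof -
  have nz: "g 1 \<noteq> 0" "g 2 \<noteq> 0" "g 3 \<noteq> 0" "g 4 \<noteq> 0" "g 5 \<noteq> 0" "g 6 \<noteq> 0" "g 7 \<noteq> 0"
    using g by auto
  from k consider "k = 1" | "k = 2" | "k = 3" | "k = 4" | "k = 5" | "k = 6" | "k = 7" by force
  then show ?thesis
    using nz unfolding ricci_op_def ric_tensor_def curv_coef_def LC_coef_def atLeastAtMost_1_7
    by cases (simp add: ga_roots_def ga_weight_def root_row_def ga_bracket_def bracket_of_d_def ga_d_def;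
      (simp add: field_simps)?; (simp add: algebra_simps power2_eq_square)?)+
qed

lemma ricci_op_ga_offdiag:
  assumes g: "\<forall>i\<in>{1..7}. g i \<noteq> 0" and jk: "j \<in> {1..7}" "k \<in> {1..7}" "k \<noteq> j"
  shows "ricci_op 7 (ga_bracket a) g k j = 0"
proof -
  have nz: "g 1 \<noteq> 0" "g 2 \<noteq> 0" "g 3 \<noteq> 0" "g 4 \<noteq> 0" "g 5 \<noteq> 0" "g 6 \<noteq> 0" "g 7 \<noteq> 0"
    using g by auto
  from jk(1,2) have "j \<in> {1,2,3,4,5,6,7}" "k \<in> {1,2,3,4,5,6,7}" by auto
  then show ?thesis
    using jk(3) nz unfolding ricci_op_def ric_tensor_def curv_coef_def LC_coef_def atLeastAtMost_1_7
      insert_iff empty_iff simp_thms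
    by (elim disjE; simp add: ga_bracket_def bracket_of_d_def ga_d_def; (simp add: field_simps)?;
      (simp add: algebra_simps power2_eq_square)?)
qed

lemma root_triples_ga:
  assumes "a \<noteq> 0" "a \<noteq> 1"
  shows "root_triples 7 (ga_bracket a) = ga_roots"
proof (rule set_eqI)
  fix r :: "nat \<times> nat \<times> nat"
  obtain i j k where r: "r = (i, j, k)" by (cases r)
  show "r \<in> root_triples 7 (ga_bracket a) \<longleftrightarrow> r \<in> ga_roots"
  proof
    assume "r \<in> root_triples 7 (ga_bracket a)"
    then have "i < j" "ga_bracket a i j k \<noteq> 0" unfolding root_triples_def r by auto
    then show "r \<in> ga_roots" unfolding r ga_roots_def
      by (auto simp: ga_bracket_def bracket_of_d_def ga_d_def split: if_splits)
  next
    assume "r \<in> ga_roots"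
    then show "r \<in> root_triples 7 (ga_bracket a)" using assms
      unfolding r ga_roots_def root_triples_def by (auto simp: ga_bracket_def bracket_of_d_def ga_d_def)
  qed
qed

lemma nik_diag_ga:
  assumes "a \<noteq> 0" "a \<noteq> 1" "k \<in> {1..7}"
  shows "nik_diag 7 (ga_bracket a) k = real k / 5"
proof -
  define P where "P = (\<lambda>b :: nat \<times> nat \<times> nat \<Rightarrow> real. \<forall>r\<in>ga_roots.
    (\<Sum>s\<in>ga_roots. (\<Sum>m\<in>{1..7}. root_row r m * root_row s m) * b s) = 1)"
  define b0 :: "nat \<times> nat \<times> nat \<Rightarrow> real" where
    "b0 = (\<lambda>r. if r = (1,3,4) then -1/5 else if r = (2,3,5) then 3/5 else if r = (1,5,6) then 3/5
      else if r = (1,6,7) then 2/5 else 0)"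
  define b where "b = (SOME b. P b)"
  \<comment> \<open>\<open>M\<^sup>T b\<close> does not depend on the solution \<open>b\<close> of \<open>M M\<^sup>T b = [1]\<close>, so any solution will do\<close>
  have "P b0" unfolding P_def ga_roots_def b0_def atLeastAtMost_1_7 by (simp add: root_row_def)
  then have "P b" unfolding b_def by (rule someI[of P])
  then have normal: "(\<Sum>s\<in>ga_roots. (\<Sum>m\<in>{1..7}. root_row r m * root_row s m) * b s) = 1"
    if "r \<in> {(1,2,3), (1,3,4), (1,4,5), (2,3,5), (1,5,6), (2,4,6), (1,6,7), (2,5,7), (3,4,7)}" for r
    using that unfolding P_def ga_roots_def[symmetric] by blast
  have nik: "nik_diag 7 (ga_bracket a) k = (\<Sum>r\<in>ga_roots. b r * root_row r k) + 1"
    unfolding nik_diag_def root_triples_ga[OF assms(1,2)] Let_def b_def P_def by simp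
  from assms(3) have "k \<in> {1,2,3,4,5,6,7}" by auto
  then show ?thesis
    unfolding nik using normal[of "(1,2,3)"] normal[of "(1,3,4)"] normal[of "(1,4,5)"]
      normal[of "(2,3,5)"] normal[of "(1,5,6)"] normal[of "(2,4,6)"] normal[of "(1,6,7)"]
      normal[of "(2,5,7)"] normal[of "(3,4,7)"]
    unfolding ga_roots_def atLeastAtMost_1_7 by (auto simp: root_row_def)
qed

lemma ric_condition_ga_iff_linear:
  assumes a: "a \<noteq> 0" "a \<noteq> 1" and g: "\<forall>i\<in>{1..7}. g i \<noteq> 0"
  shows "ric_condition 7 (ga_bracket a) g \<longleftrightarrow>
    (\<forall>k\<in>{1..7}. (\<Sum>r\<in>ga_roots. ga_weight a g r * root_row r k) = real k / 5 - 1)"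
proof -
  let ?N = "\<lambda>k. - 1/2 + 1/2 * nik_diag 7 (ga_bracket a) k"
  have "(\<forall>j\<in>{1..7}. \<forall>k\<in>{1..7}. ricci_op 7 (ga_bracket a) g k j = (if k = j then ?N k else 0))
    \<longleftrightarrow> (\<forall>k\<in>{1..7}. ricci_op 7 (ga_bracket a) g k k = ?N k)"
    using ricci_op_ga_offdiag[OF g] by auto
  moreover have "ricci_op 7 (ga_bracket a) g k k = ?N k \<longleftrightarrow>
      (\<Sum>r\<in>ga_roots. ga_weight a g r * root_row r k) = real k / 5 - 1" if "k \<in> {1..7}" for k
    unfolding ricci_op_ga_diag[OF g that] nik_diag_ga[OF a that] by (intro iffI; linarith)
  ultimately show ?thesis using g unfolding ric_condition_def by auto
qed

lemma ga_weight_values: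
  "ga_weight a g (1,2,3) = (1-a)^2 * g 3 / (g 1 * g 2)" "ga_weight a g (1,3,4) = g 4 / (g 1 * g 3)"
  "ga_weight a g (1,4,5) = a^2 * g 5 / (g 1 * g 4)" "ga_weight a g (2,3,5) = g 5 / (g 2 * g 3)"
  "ga_weight a g (1,5,6) = g 6 / (g 1 * g 5)" "ga_weight a g (2,4,6) = g 6 / (g 2 * g 4)"
  "ga_weight a g (1,6,7) = g 7 / (g 1 * g 6)" "ga_weight a g (2,5,7) = g 7 / (g 2 * g 5)"
  "ga_weight a g (3,4,7) = g 7 / (g 3 * g 4)"
  by (simp_all add: ga_weight_def ga_d_def)

lemma ga_weight_relations:
  fixes a :: real
  assumes "\<forall>i\<in>{1..7}. g i \<noteq> 0"
  defines "w \<equiv> ga_weight a g"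
  shows "w (1,3,4) * w (2,4,6) = w (2,3,5) * w (1,5,6)"
    "w (1,3,4) * w (1,4,5) * w (2,5,7) = a^2 * w (2,3,5) * w (1,5,6) * w (1,6,7)"
    "w (1,2,3) * w (1,3,4) * w (3,4,7) = (1-a)^2 * w (2,3,5) * w (1,5,6) * w (1,6,7)"
proof -
  have "g 1 \<noteq> 0" "g 2 \<noteq> 0" "g 3 \<noteq> 0" "g 4 \<noteq> 0" "g 5 \<noteq> 0" "g 6 \<noteq> 0" "g 7 \<noteq> 0"
    using assms(1) by auto
  then show "w (1,3,4) * w (2,4,6) = w (2,3,5) * w (1,5,6)"
    "w (1,3,4) * w (1,4,5) * w (2,5,7) = a^2 * w (2,3,5) * w (1,5,6) * w (1,6,7)"
    "w (1,2,3) * w (1,3,4) * w (3,4,7) = (1-a)^2 * w (2,3,5) * w (1,5,6) * w (1,6,7)"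
    unfolding w_def ga_weight_values by (simp_all add: field_simps)
qed

text \<open>\<open>x0, \<dots>, x8\<close> stand for the weights of the roots (1,2,3), (1,3,4), (1,4,5), (2,3,5), (1,5,6),
  (2,4,6), (1,6,7), (2,5,7), (3,4,7): the linear equations are \<open>M\<^sub>\<Delta>\<^sup>T x = N - id\<close>, the products
  the relations between the weights of any metric.\<close>
definition ric_system ::
    "real \<Rightarrow> real \<Rightarrow> real \<Rightarrow> real \<Rightarrow> real \<Rightarrow> real \<Rightarrow> real \<Rightarrow> real \<Rightarrow> real \<Rightarrow> real \<Rightarrow> bool" where
  "ric_system a x0 x1 x2 x3 x4 x5 x6 x7 x8 \<longleftrightarrow>
     x0 \<noteq> 0 \<and> x1 \<noteq> 0 \<and> x2 \<noteq> 0 \<and> x3 \<noteq> 0 \<and> x4 \<noteq> 0 \<and> x5 \<noteq> 0 \<and> x6 \<noteq> 0 \<and> x7 \<noteq> 0 \<and> x8 \<noteq> 0 \<and>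
     x0 + x1 + x2 + x4 + x6 = 4/5 \<and> x0 + x3 + x5 + x7 = 3/5 \<and> x1 + x3 + x8 - x0 = 2/5 \<and>
     x2 + x5 + x8 - x1 = 1/5 \<and> x2 + x3 = x4 + x7 \<and> x4 + x5 - x6 = 1/5 \<and> x6 + x7 + x8 = 2/5 \<and>
     x1 * x5 = x3 * x4 \<and> x1 * x2 * x7 = a^2 * x3 * x4 * x6 \<and> x0 * x1 * x8 = (1-a)^2 * x3 * x4 * x6"

lemma ric_condition_ga_iff:
  assumes a: "a \<noteq> 0" "a \<noteq> 1" and g: "\<forall>i\<in>{1..7}. g i \<noteq> 0"
  defines "w \<equiv> ga_weight a g"
  shows "ric_condition 7 (ga_bracket a) g \<longleftrightarrow> ric_system a (w (1,2,3)) (w (1,3,4)) (w (1,4,5))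
    (w (2,3,5)) (w (1,5,6)) (w (2,4,6)) (w (1,6,7)) (w (2,5,7)) (w (3,4,7))"
proof -
  have nz: "g 1 \<noteq> 0" "g 2 \<noteq> 0" "g 3 \<noteq> 0" "g 4 \<noteq> 0" "g 5 \<noteq> 0" "g 6 \<noteq> 0" "g 7 \<noteq> 0"
    using g by auto
  have "1 - a \<noteq> 0" using a(2) by simp
  then have nonzero: "w (1,2,3) \<noteq> 0 \<and> w (1,3,4) \<noteq> 0 \<and> w (1,4,5) \<noteq> 0 \<and> w (2,3,5) \<noteq> 0 \<and>
    w (1,5,6) \<noteq> 0 \<and> w (2,4,6) \<noteq> 0 \<and> w (1,6,7) \<noteq> 0 \<and> w (2,5,7) \<noteq> 0 \<and> w (3,4,7) \<noteq> 0"
    using nz a(1) unfolding w_def ga_weight_values by simp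
  note products = ga_weight_relations[OF g, where a = a, folded w_def]
  have linear: "(\<forall>k\<in>{1..7}. (\<Sum>r\<in>ga_roots. w r * root_row r k) = real k / 5 - 1) \<longleftrightarrow>
    w (1,2,3) + w (1,3,4) + w (1,4,5) + w (1,5,6) + w (1,6,7) = 4/5 \<and>
    w (1,2,3) + w (2,3,5) + w (2,4,6) + w (2,5,7) = 3/5 \<and>
    w (1,3,4) + w (2,3,5) + w (3,4,7) - w (1,2,3) = 2/5 \<and>
    w (1,4,5) + w (2,4,6) + w (3,4,7) - w (1,3,4) = 1/5 \<and>
    w (1,4,5) + w (2,3,5) = w (1,5,6) + w (2,5,7) \<and>
    w (1,5,6) + w (2,4,6) - w (1,6,7) = 1/5 \<and>
    w (1,6,7) + w (2,5,7) + w (3,4,7) = 2/5"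
    unfolding atLeastAtMost_1_7 by (simp add: ga_roots_def root_row_def) linarith
  show ?thesis unfolding ric_condition_ga_iff_linear[OF a g, folded w_def] ric_system_def linear
    using nonzero products by blast
qed

lemma ga_weights_realised:
  assumes a: "a \<noteq> 0" "a \<noteq> 1" and S: "ric_system a x0 x1 x2 x3 x4 x5 x6 x7 x8"
  obtains g where "\<forall>i\<in>{1..7}. g i \<noteq> 0" "0 < g 1 \<longleftrightarrow> e"
    "ga_weight a g (1,2,3) = x0" "ga_weight a g (1,3,4) = x1" "ga_weight a g (1,4,5) = x2"
    "ga_weight a g (2,3,5) = x3" "ga_weight a g (1,5,6) = x4" "ga_weight a g (2,4,6) = x5"
    "ga_weight a g (1,6,7) = x6" "ga_weight a g (2,5,7) = x7" "ga_weight a g (3,4,7) = x8"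
proof -
  note S' = S[unfolded ric_system_def]
  have x: "x0 \<noteq> 0" "x1 \<noteq> 0" "x2 \<noteq> 0" "x3 \<noteq> 0" "x4 \<noteq> 0" "x6 \<noteq> 0" "1 - a \<noteq> 0"
    using S' a(2) by simp_all
  \<comment> \<open>g 1 is free, g 2 is fixed by the two roots (1,4,5), (2,3,5) ending in 5, and the roots
    (1,2,3), (1,3,4), (2,3,5), (1,5,6), (1,6,7) then determine g 3, ..., g 7\<close>
  define g1 :: real where "g1 = (if e then 1 else -1)"
  define g2 where "g2 = x1 * x2 / (a^2 * x3)"
  define g3 where "g3 = x0 * g1 * g2 / (1-a)^2"
  define g4 where "g4 = x1 * g1 * g3"
  define g5 where "g5 = x3 * g2 * g3"
  define g6 where "g6 = x4 * g1 * g5"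
  define g7 where "g7 = x6 * g1 * g6"
  define g :: "nat \<Rightarrow> real" where "g i = [g1, g2, g3, g4, g5, g6, g7] ! (i - 1)" for i
  have gs: "g 1 = g1" "g 2 = g2" "g 3 = g3" "g 4 = g4" "g 5 = g5" "g 6 = g6" "g 7 = g7"
    by (simp_all add: g_def)
  have g11: "g1 * g1 = 1" and n1: "g1 \<noteq> 0" by (simp_all add: g1_def)
  have n: "g2 \<noteq> 0" "g3 \<noteq> 0" "g4 \<noteq> 0" "g5 \<noteq> 0" "g6 \<noteq> 0" "g7 \<noteq> 0"
    using x n1 a(1) by (simp_all add: g2_def g3_def g4_def g5_def g6_def g7_def)
  have nz: "\<forall>i\<in>{1..7}. g i \<noteq> 0" unfolding atLeastAtMost_1_7 using gs n1 n by simp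
  have sign: "0 < g 1 \<longleftrightarrow> e" unfolding gs by (simp add: g1_def)
  have tree: "ga_weight a g (1,2,3) = x0" "ga_weight a g (1,3,4) = x1" "ga_weight a g (2,3,5) = x3"
    "ga_weight a g (1,5,6) = x4" "ga_weight a g (1,6,7) = x6"
    using n1 n x unfolding ga_weight_values gs
    by (simp_all add: g3_def g4_def g5_def g6_def g7_def field_simps)
  have w145: "ga_weight a g (1,4,5) = x2"
    using n1 n x g11 a(1) unfolding ga_weight_values gs
    by (simp add: g2_def g4_def g5_def field_simps)
  have "x1 * ga_weight a g (2,4,6) = x1 * x5" "x1 * x2 * ga_weight a g (2,5,7) = x1 * x2 * x7"
    "x0 * x1 * ga_weight a g (3,4,7) = x0 * x1 * x8"
    using ga_weight_relations[OF nz, where a = a] S' unfolding tree w145 by simp_all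
  then have "ga_weight a g (2,4,6) = x5" "ga_weight a g (2,5,7) = x7" "ga_weight a g (3,4,7) = x8"
    using x by simp_all
  with nz sign tree w145 show thesis by (intro that)
qed

section \<open>Signatures\<close>

definition insert_unless :: "bool \<Rightarrow> 'a \<Rightarrow> 'a set \<Rightarrow> 'a set" where
  "insert_unless b x A = (if b then A else insert x A)"

lemma insert_unless_simps [simp]: "insert_unless True x A = A" "insert_unless False x A = insert x A"
  by (simp_all add: insert_unless_def)

definition signature_of_signs ::
    "bool \<Rightarrow> bool \<Rightarrow> bool \<Rightarrow> bool \<Rightarrow> bool \<Rightarrow> bool \<Rightarrow> bool \<Rightarrow> nat set" where
  "signature_of_signs s1 s2 s3 s4 s5 s6 s7 = insert_unless s1 1 (insert_unless s2 2 (insert_unless s3 3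
     (insert_unless s4 4 (insert_unless s5 5 (insert_unless s6 6 (insert_unless s7 7 {}))))))"

lemma Collect_insert_insert_unless: "{x \<in> insert a A. P x} = insert_unless (\<not> P a) a {x \<in> A. P x}"
  by (auto simp: insert_unless_def)

lemma signature_7_eq:
  assumes "\<forall>i\<in>{1..7}. g i \<noteq> 0"
  shows "signature 7 g = signature_of_signs (0 < g 1) (0 < g 2) (0 < g 3) (0 < g 4) (0 < g 5) (0 < g 6) (0 < g 7)"
proof -
  have "\<not> g i < 0 \<longleftrightarrow> 0 < g i" if "i \<in> {1..7}" for i using assms that by force
  then show ?thesis
    unfolding signature_def signature_of_signs_def atLeastAtMost_1_7 Collect_insert_insert_unless
    by simp
qed

text \<open>Signature of a metric with \<open>0 < g 1 \<longleftrightarrow> s1\<close> whose weights of (1,2,3), (1,3,4), (1,4,5),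
  (2,3,5), (1,5,6), (1,6,7) have the signs \<open>p0, p1, p2, p3, p4, p6\<close>: the sign of \<open>g k\<close> is the product
  of the signs of the weight of \<open>(i,j,k)\<close>, of \<open>g i\<close> and of \<open>g j\<close>; for \<open>g 2\<close> compare the two roots
  (1,4,5), (2,3,5) ending in 5.\<close>
definition ga_signature :: "bool \<Rightarrow> bool \<Rightarrow> bool \<Rightarrow> bool \<Rightarrow> bool \<Rightarrow> bool \<Rightarrow> bool \<Rightarrow> nat set" where
  "ga_signature s1 p0 p1 p2 p3 p4 p6 =
     (let s2 = (p3 \<longleftrightarrow> (p2 \<longleftrightarrow> p1)); s3 = (p0 \<longleftrightarrow> (s1 \<longleftrightarrow> s2)); s4 = (p1 \<longleftrightarrow> (s1 \<longleftrightarrow> s3));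
          s5 = (p2 \<longleftrightarrow> (s1 \<longleftrightarrow> s4)); s6 = (p4 \<longleftrightarrow> (s1 \<longleftrightarrow> s5)); s7 = (p6 \<longleftrightarrow> (s1 \<longleftrightarrow> s6))
      in signature_of_signs s1 s2 s3 s4 s5 s6 s7)"

lemma ga_signature_of_signs:
  "ga_signature s1 (s3 \<longleftrightarrow> (s1 \<longleftrightarrow> s2)) (s4 \<longleftrightarrow> (s1 \<longleftrightarrow> s3)) (s5 \<longleftrightarrow> (s1 \<longleftrightarrow> s4))
     (s5 \<longleftrightarrow> (s2 \<longleftrightarrow> s3)) (s6 \<longleftrightarrow> (s1 \<longleftrightarrow> s5)) (s7 \<longleftrightarrow> (s1 \<longleftrightarrow> s6))
   = signature_of_signs s1 s2 s3 s4 s5 s6 s7"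
  unfolding ga_signature_def Let_def
  by (cases s1; cases s2; cases s3; cases s4; cases s5; cases s6; cases s7) simp_all

lemma zero_less_weight_iff:
  fixes c x y z :: real
  assumes "c \<noteq> 0" "x \<noteq> 0" "y \<noteq> 0" "z \<noteq> 0"
  shows "0 < c^2 * z / (x * y) \<longleftrightarrow> (0 < z \<longleftrightarrow> (0 < x \<longleftrightarrow> 0 < y))"
  using assms by (cases "0 < x"; cases "0 < y"; cases "0 < z")
    (auto simp: zero_less_divide_iff zero_less_mult_iff mult_less_0_iff)

lemma signature_ga_weights:
  assumes a: "a \<noteq> 0" "a \<noteq> 1" and g: "\<forall>i\<in>{1..7}. g i \<noteq> 0"
  defines "w \<equiv> ga_weight a g"
  shows "signature 7 g = ga_signature (0 < g 1) (0 < w (1,2,3)) (0 < w (1,3,4)) (0 < w (1,4,5))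
    (0 < w (2,3,5)) (0 < w (1,5,6)) (0 < w (1,6,7))"
proof -
  have nz: "g 1 \<noteq> 0" "g 2 \<noteq> 0" "g 3 \<noteq> 0" "g 4 \<noteq> 0" "g 5 \<noteq> 0" "g 6 \<noteq> 0" "g 7 \<noteq> 0"
    using g by auto
  have "w (1,2,3) = (1-a)^2 * g 3 / (g 1 * g 2)" "w (1,4,5) = a^2 * g 5 / (g 1 * g 4)"
    "w (1,3,4) = 1^2 * g 4 / (g 1 * g 3)" "w (2,3,5) = 1^2 * g 5 / (g 2 * g 3)"
    "w (1,5,6) = 1^2 * g 6 / (g 1 * g 5)" "w (1,6,7) = 1^2 * g 7 / (g 1 * g 6)"
    unfolding w_def ga_weight_values by simp_all
  moreover have "1 - a \<noteq> 0" using a(2) by simp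
  ultimately show ?thesis
    unfolding signature_7_eq[OF g]
    by (simp only: zero_less_weight_iff nz a(1) one_neq_zero ga_signature_of_signs not_False_eq_True)
qed

section \<open>The cubic equation\<close>

definition weight_cubic :: "real \<Rightarrow> real \<Rightarrow> real" where
  "weight_cubic k v = (v - 4/25)^2 - k * (2/5 - v)^2 * (4/25 - 3*v/5)"

lemma weight_cubic_one: "weight_cubic 1 v = 3/5 * v * (v - 1/5) * (v + 4/5)"
  unfolding weight_cubic_def by algebra

lemma weight_cubic_at_0: "weight_cubic k 0 = 16/625 * (1 - k)"
  and weight_cubic_at_4_25: "weight_cubic k (4/25) = - k * (288/78125)"
  and weight_cubic_at_4_15: "weight_cubic k (4/15) = 64/5625"
  unfolding weight_cubic_def by (simp_all add: power2_eq_square)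

lemma continuous_on_weight_cubic: "continuous_on S (weight_cubic k)"
  unfolding weight_cubic_def by (intro continuous_intros) auto

lemma weight_cubic_diff: "weight_cubic k v - weight_cubic k' v = (k' - k) * ((2/5 - v)^2 * (4/25 - 3*v/5))"
  unfolding weight_cubic_def by algebra

lemma weight_cubic_root_bounds:
  assumes "k > 0" "weight_cubic k v = 0"
  shows "v \<noteq> 4/25" "4/25 - 3*v/5 > 0"
proof -
  show v: "v \<noteq> 4/25"
  proof
    assume "v = 4/25"
    with assms show False by (simp add: weight_cubic_at_4_25)
  qed
  have "0 < (v - 4/25)^2" using v by simp
  also have "\<dots> = k * (2/5 - v)^2 * (4/25 - 3*v/5)" using assms(2) unfolding weight_cubic_def by simp
  finally have "0 < k * (2/5 - v)^2 * (4/25 - 3*v/5)" .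
  moreover have "k * (2/5 - v)^2 \<ge> 0" using assms(1) by simp
  ultimately show "4/25 - 3*v/5 > 0" by (metis mult_nonneg_nonpos not_le)
qed

text \<open>\<open>k_crit = (2\<beta>)\<^sup>2\<close> is the value of \<open>k\<close> at which the two negative roots of the cubic
  merge into the double root \<open>(1 - \<surd>41)/25\<close>.\<close>
definition k_crit :: real where "k_crit = (123 * sqrt 41 - 767) / 16"

lemma sqrt_41_gt: "sqrt 41 > (6.4::real)"
  by (rule real_less_rsqrt) (simp add: power2_eq_square)

lemma k_crit_gt_1: "k_crit > 1"
  using sqrt_41_gt unfolding k_crit_def by simp

lemma weight_cubic_k_crit_factor:
  "weight_cubic k_crit v = - ((v - (1 - sqrt 41)/25)^2 * ((9*sqrt 41 - 57)/4 - 3*k_crit*v/5))"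
proof -
  define s where "s = sqrt 41"
  \<comment> \<open>as polynomials in \<open>s\<close> and \<open>v\<close> the two sides differ by a multiple of \<open>41 - s\<^sup>2\<close>\<close>
  have "s^2 = 41" unfolding s_def by simp
  moreover have "(v - 4/25)^2 - (123*s - 767)/16 * (2/5 - v)^2 * (4/25 - 3*v/5)
      + (v - (1 - s)/25)^2 * ((9*s - 57)/4 - 3*((123*s - 767)/16)*v/5)
    = (41 - s^2) * (3/100 - 9/2500*s - 12039/50000*v + 369/50000*v*s + 369/1000*v^2)"
    by algebra
  ultimately show ?thesis unfolding weight_cubic_def k_crit_def s_def[symmetric] by simp
qed

lemma weight_cubic_k_crit_nonpos:
  assumes "v < 0" shows "weight_cubic k_crit v \<le> 0"
proof -
  have "3*k_crit*v/5 < 0" using k_crit_gt_1 assms by (simp add: mult_pos_neg)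
  moreover have "(9*sqrt 41 - 57)/4 > 0" using sqrt_41_gt by simp
  ultimately have "(9*sqrt 41 - 57)/4 - 3*k_crit*v/5 \<ge> 0" by linarith
  then show ?thesis unfolding weight_cubic_k_crit_factor by simp
qed

lemma weight_cubic_neg_root_le_k_crit:
  assumes "v < 0" "weight_cubic k v = 0" shows "k \<le> k_crit"
proof -
  have pos: "(2/5 - v)^2 * (4/25 - 3*v/5) > 0" using assms(1) by simp
  have "(k_crit - k) * ((2/5 - v)^2 * (4/25 - 3*v/5)) \<ge> 0"
    using weight_cubic_diff[of k v k_crit] assms(2) weight_cubic_k_crit_nonpos[OF assms(1)] by simp
  then show ?thesis using pos by (simp add: zero_le_mult_iff)
qed

lemma weight_cubic_small_root_lt_1:
  assumes "0 < v" "v < 4/25" "weight_cubic k v = 0" shows "k < 1"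
proof -
  have pos: "(2/5 - v)^2 * (4/25 - 3*v/5) > 0" using assms(2) by simp
  have "(v - 1/5) * (v + 4/5) < 0" using assms(1,2) by (simp add: mult_neg_pos)
  then have "weight_cubic 1 v < 0" unfolding weight_cubic_one using assms(1) by (simp add: mult_pos_neg)
  then have "(1 - k) * ((2/5 - v)^2 * (4/25 - 3*v/5)) > 0" using weight_cubic_diff[of k v 1] assms(3) by simp
  then show ?thesis using pos by (simp add: zero_less_mult_iff)
qed

lemma weight_cubic_root_large:
  assumes "k > 0" obtains v where "4/25 < v" "v < 4/15" "weight_cubic k v = 0"
proof -
  have "weight_cubic k (4/25) < 0" "0 < weight_cubic k (4/15)" using assms by (simp_all add: weight_cubic_at_4_25 weight_cubic_at_4_15)
  then obtain v where v: "4/25 \<le> v" "v \<le> 4/15" "weight_cubic k v = 0"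
    using IVT'[of "weight_cubic k" "4/25" 0 "4/15"] continuous_on_weight_cubic by fastforce
  with \<open>weight_cubic k (4/25) < 0\<close> \<open>0 < weight_cubic k (4/15)\<close> have "v \<noteq> 4/25" "v \<noteq> 4/15"
    by (metis less_irrefl)+
  with v show ?thesis by (intro that[of v]) auto
qed

lemma weight_cubic_root_small:
  assumes "0 < k" "k < 1" obtains v where "0 < v" "v < 4/25" "weight_cubic k v = 0"
proof -
  have "weight_cubic k (4/25) < 0" "0 < weight_cubic k 0" using assms by (simp_all add: weight_cubic_at_4_25 weight_cubic_at_0)
  then obtain v where v: "0 \<le> v" "v \<le> 4/25" "weight_cubic k v = 0"
    using IVT2'[of "weight_cubic k" "4/25" 0 0] continuous_on_weight_cubic by fastforce
  with \<open>weight_cubic k (4/25) < 0\<close> \<open>0 < weight_cubic k 0\<close> have "v \<noteq> 4/25" "v \<noteq> 0"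
    by (metis less_irrefl)+
  with v show ?thesis by (intro that[of v]) auto
qed

lemma weight_cubic_far_left_neg:
  assumes "0 < k" shows "weight_cubic k (- 2/k) < 0"
proof -
  define w where "w = - 2/k"
  have "w < 0" using assms by (simp add: w_def)
  have "(w - 4/25)^2 = (4/25 - w)^2" by (simp add: power2_commute)
  also have "\<dots> < (2/5 - w)^2" using \<open>w < 0\<close> by (intro power_strict_mono) auto
  also have "\<dots> = (2/5 - w)^2 * 1" by simp
  also have "\<dots> < (2/5 - w)^2 * (k * (4/25 - 3*w/5))"
  proof (rule mult_strict_left_mono)
    have "k * (4/25 - 3*w/5) = 4*k/25 + 6/5" using assms by (simp add: w_def field_simps)
    then show "1 < k * (4/25 - 3*w/5)" using assms by simp
  qed (use \<open>w < 0\<close> in simp)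
  finally show ?thesis unfolding weight_cubic_def w_def[symmetric] by (simp add: mult_ac)
qed

lemma weight_cubic_root_neg:
  assumes "0 < k" "k \<noteq> 1" "k \<le> k_crit" obtains v where "v < 0" "weight_cubic k v = 0"
proof -
  have "\<exists>v<0. weight_cubic k v = 0"
  proof (cases "k < 1")
    case True
    have "- 2/k < 0" using assms(1) by simp
    moreover have "0 < weight_cubic k 0" using True by (simp add: weight_cubic_at_0)
    ultimately have "\<exists>v\<ge>- 2/k. v \<le> 0 \<and> weight_cubic k v = 0"
      using weight_cubic_far_left_neg[OF assms(1)] by (intro IVT') (simp_all add: continuous_on_weight_cubic)
    with \<open>0 < weight_cubic k 0\<close> show ?thesis by (metis less_irrefl order.order_iff_strict)
  next
    case False
    define w where "w = (1 - sqrt 41)/25"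
    have "w < 0" using sqrt_41_gt by (simp add: w_def)
    have "weight_cubic k_crit w = 0" unfolding weight_cubic_k_crit_factor w_def by simp
    then have "0 \<le> weight_cubic k w" using weight_cubic_diff[of k w k_crit] assms(3) \<open>w < 0\<close> by simp
    moreover have "weight_cubic k 0 < 0" using False assms(2) by (simp add: weight_cubic_at_0)
    ultimately have "\<exists>v\<ge>w. v \<le> 0 \<and> weight_cubic k v = 0"
      using \<open>w < 0\<close> by (intro IVT2') (simp_all add: continuous_on_weight_cubic)
    with \<open>weight_cubic k 0 < 0\<close> show ?thesis by (metis less_irrefl order.order_iff_strict)
  qed
  with that show ?thesis by blast
qed

section \<open>Solving the system\<close>

lemma ric_system_reduce:
  assumes "ric_system a x0 x1 x2 x3 x4 x5 x6 x7 x8"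
  shows "x3 = 2/5 - x1" "x4 = x3" "x6 = 2/5 - (x0 + x2)" "x7 = x2" "x8 = x0"
    "x1 * (x0 + x2) = x1 - 4/25"
    "x1 * x0^2 = (1-a)^2 * x3^2 * x6" "x1 * x2^2 = a^2 * x3^2 * x6"
proof -
  note S = assms[unfolded ric_system_def]
  have lin: "x0 + x1 + x2 + x4 + x6 = 4/5" "x0 + x3 + x5 + x7 = 3/5" "x1 + x3 + x8 - x0 = 2/5"
    "x2 + x5 + x8 - x1 = 1/5" "x2 + x3 = x4 + x7" "x4 + x5 - x6 = 1/5" "x6 + x7 + x8 = 2/5"
    using S by blast+
  show x3: "x3 = 2/5 - x1" and x4: "x4 = x3" and "x6 = 2/5 - (x0 + x2)" and x7: "x7 = x2"
    and x8: "x8 = x0"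
    using lin by linarith+
  have "x5 = 3/5 - x3 - x0 - x2" using lin x7 by linarith
  moreover have "x1 * x5 = x3 * x3" using S x4 by simp
  ultimately show "x1 * (x0 + x2) = x1 - 4/25" using x3 by algebra
  show "x1 * x0^2 = (1-a)^2 * x3^2 * x6" "x1 * x2^2 = a^2 * x3^2 * x6"
    using S x4 x7 x8 by (simp_all add: power2_eq_square algebra_simps)
qed

lemma ric_system_weight_ratio:
  assumes "ric_system a x0 x1 x2 x3 x4 x5 x6 x7 x8"
  shows "(1-a) * x2 = a * x0 \<or> (1-a) * x2 = - (a * x0)"
proof -
  note R = ric_system_reduce[OF assms]
  have "x1 * ((1-a) * x2)^2 = x1 * (a * x0)^2"
    using R(7,8) by algebra
  moreover have "x1 \<noteq> 0" using assms unfolding ric_system_def by simp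
  ultimately have "((1-a) * x2)^2 = (a * x0)^2" by simp
  then show ?thesis by (simp add: power2_eq_iff)
qed

lemma weight_cubic_of_split:
  assumes "v \<noteq> 0" "v * W = v - 4/25" "v * (\<rho> * W)^2 = c^2 * (2/5 - v)^2 * (2/5 - W)"
    "c^2 = k * \<rho>^2" "\<rho> \<noteq> 0"
  shows "weight_cubic k v = 0"
proof -
  have "\<rho>^2 * (v * W^2) = \<rho>^2 * (k * (2/5 - v)^2 * (2/5 - W))"
    using assms(3,4) by (simp add: power_mult_distrib algebra_simps)
  then have "v * W^2 = k * (2/5 - v)^2 * (2/5 - W)" using assms(5) by simp
  then have "(v * W)^2 = k * (2/5 - v)^2 * (2/5 * v - v * W)" by algebra
  then show ?thesis unfolding weight_cubic_def assms(2) by algebra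
qed

lemma ric_system_cases:
  assumes a: "a \<noteq> 0" "a \<noteq> 1" and S: "ric_system a x0 x1 x2 x3 x4 x5 x6 x7 x8"
  defines "W \<equiv> (x1 - 4/25) / x1"
  obtains (same) "x0 = (1-a) * W" "x2 = a * W" "weight_cubic 1 x1 = 0"
    | (opposite) "a \<noteq> 1/2" "x0 = (1-a)/(1-2*a) * W" "x2 = -a/(1-2*a) * W" "weight_cubic ((1-2*a)^2) x1 = 0"
    | (half) "a = 1/2" "x1 = 4/25" "x2 = - x0"
proof -
  note R = ric_system_reduce[OF S]
  have nz: "x0 \<noteq> 0" "x1 \<noteq> 0" using S unfolding ric_system_def by simp_all
  have W: "x0 + x2 = W" "x1 * W = x1 - 4/25" using R(6) nz(2) by (simp_all add: W_def field_simps)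
  have x0: "x1 * x0^2 = (1-a)^2 * (2/5 - x1)^2 * (2/5 - W)" using R(1,3,7) W(1) by simp
  from ric_system_weight_ratio[OF S] show thesis
  proof
    assume "(1-a) * x2 = a * x0"
    then have x02: "x0 = (1-a) * W" "x2 = a * W" using W(1) by algebra+
    from x0 have "x1 * ((1-a) * W)^2 = (1-a)^2 * (2/5 - x1)^2 * (2/5 - W)" unfolding x02(1) .
    then have "weight_cubic 1 x1 = 0" by (rule weight_cubic_of_split[OF nz(2) W(2)]) (use a(2) in simp_all)
    with x02 show thesis by (rule same)
  next
    assume opp: "(1-a) * x2 = - (a * x0)"
    show thesis
    proof (cases "a = 1/2")
      case True
      have "x2 = - x0" using opp unfolding True by simp
      then have "x1 = 4/25" using W nz(2) by simp
      show thesis using True \<open>x1 = 4/25\<close> \<open>x2 = - x0\<close> by (rule half)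
    next
      case False
      then have d: "1 - 2*a \<noteq> 0" by simp
      have "(1-2*a) * x0 = (1-a) * W" "(1-2*a) * x2 = -a * W" using opp W(1) by algebra+
      then have x02: "x0 = (1-a)/(1-2*a) * W" "x2 = -a/(1-2*a) * W"
        using d by (simp_all add: field_simps)
      from x0 have "x1 * ((1-a)/(1-2*a) * W)^2 = (1-a)^2 * (2/5 - x1)^2 * (2/5 - W)"
        unfolding x02(1) .
      then have "weight_cubic ((1-2*a)^2) x1 = 0"
        by (rule weight_cubic_of_split[OF nz(2) W(2)]) (use a(2) d in \<open>simp_all add: power_divide\<close>)
      with False x02 show thesis by (intro opposite)
    qed
  qed
qed

lemma ric_system_signs:
  assumes a: "a \<noteq> 0" "a \<noteq> 1" and S: "ric_system a x0 x1 x2 x3 x4 x5 x6 x7 x8"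
  shows "0 < x3" "0 < x4" "0 < x6 \<longleftrightarrow> 0 < x1"
proof -
  note R = ric_system_reduce[OF S]
  have x1: "x1 \<noteq> 0" using S unfolding ric_system_def by simp
  have bound: "4/25 - 3*x1/5 > 0"
    using ric_system_cases[OF a S, case_names same opposite half]
  proof cases
    case same
    then show ?thesis using weight_cubic_root_bounds(2)[of 1 x1] by simp
  next
    case opposite
    then show ?thesis using weight_cubic_root_bounds(2)[of "(1-2*a)^2" x1] by simp
  qed simp
  have "x0 + x2 = (x1 - 4/25) / x1" using R(6) x1 by (simp add: field_simps)
  then have "x6 = 2/5 - (x1 - 4/25) / x1" using R(3) by simp
  also have "\<dots> = (4/25 - 3*x1/5) / x1" using x1 by (simp add: field_simps)
  finally show "0 < x6 \<longleftrightarrow> 0 < x1" using bound by (simp add: zero_less_divide_iff)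
  show "0 < x3" "0 < x4" using bound R(1,2) by linarith+
qed

text \<open>The first two patterns come from the split \<open>(1-a) : a\<close> with \<open>v = 1/5, -4/5\<close>, the next two
  from \<open>a = 1/2\<close>, the remaining ones from the split \<open>(1-a) : -a\<close> with a root
  \<open>v > 4/25\<close>, \<open>v < 0\<close>, \<open>0 < v < 4/25\<close> respectively.\<close>
definition ga_sign_patterns :: "real \<Rightarrow> (bool \<times> bool \<times> bool) set" where
  "ga_sign_patterns a =
     {(a < 1, True, 0 < a), (a < 1, False, 0 < a)} \<union>
     (if a = 1/2 then {(True, True, False), (False, True, True)}
      else {(0 < (1-a)/(1-2*a), True, 0 < -a/(1-2*a))}
        \<union> (if (1-2*a)^2 \<le> k_crit then {(0 < (1-a)/(1-2*a), False, 0 < -a/(1-2*a))} else {})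
        \<union> (if 0 < a \<and> a < 1 then {(\<not> 0 < (1-a)/(1-2*a), True, \<not> 0 < -a/(1-2*a))} else {}))"

lemma zero_less_root_quotient: "0 < (v - 4/25) / v \<longleftrightarrow> v < 0 \<or> 4/25 < (v::real)"
  by (auto simp: zero_less_divide_iff)

lemma square_1_minus_2a_lt_1D: "(1 - 2*a)^2 < 1 \<Longrightarrow> 0 < a \<and> a < (1::real)"
proof -
  assume "(1 - 2*a)^2 < 1"
  then have "a * (a - 1) < 0" by (simp add: power2_eq_square algebra_simps)
  then show ?thesis by (auto simp: mult_less_0_iff)
qed

lemma zero_less_mult_right_iff:
  fixes c W :: real
  shows "0 < W \<Longrightarrow> 0 < c * W \<longleftrightarrow> 0 < c" and "W < 0 \<Longrightarrow> c \<noteq> 0 \<Longrightarrow> 0 < c * W \<longleftrightarrow> \<not> 0 < c"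
  by (auto simp: zero_less_mult_iff)

lemma opposite_root_sign_pattern:
  assumes a: "a \<noteq> 0" "a \<noteq> 1" "a \<noteq> 1/2" and v: "weight_cubic ((1-2*a)^2) v = 0" "v \<noteq> 0"
  defines "W \<equiv> (v - 4/25) / v"
  shows "(0 < (1-a)/(1-2*a) * W, 0 < v, 0 < -a/(1-2*a) * W) \<in> ga_sign_patterns a"
proof -
  let ?r = "0 < (1-a)/(1-2*a)" and ?t = "0 < -a/(1-2*a)"
  have k: "(1-2*a)^2 > 0" using a(3) by simp
  have "v \<noteq> 4/25" using weight_cubic_root_bounds(1)[OF k v(1)] .
  then consider "v < 0" | "0 < v" "v < 4/25" | "4/25 < v" using v(2) by linarith
  then show ?thesis
  proof cases
    case 1
    then have "0 < W" "(1-2*a)^2 \<le> k_crit"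
      using weight_cubic_neg_root_le_k_crit v(1) by (auto simp: W_def zero_less_root_quotient)
    moreover from this have "(0 < (1-a)/(1-2*a) * W, 0 < v, 0 < -a/(1-2*a) * W) = (?r, False, ?t)"
      using 1 by (simp only: zero_less_mult_right_iff(1)) simp
    ultimately show ?thesis using a(3) by (simp add: ga_sign_patterns_def)
  next
    case 2
    then have "W < 0" by (simp add: W_def divide_neg_pos)
    have "(1-2*a)^2 < 1" using weight_cubic_small_root_lt_1[OF 2 v(1)] .
    then have "0 < a \<and> a < 1" by (rule square_1_minus_2a_lt_1D)
    have "(1-a)/(1-2*a) \<noteq> 0" "-a/(1-2*a) \<noteq> 0" using a by simp_all
    then have "(0 < (1-a)/(1-2*a) * W, 0 < v, 0 < -a/(1-2*a) * W) = (\<not> ?r, True, \<not> ?t)"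
      using 2 by (simp only: zero_less_mult_right_iff(2)[OF \<open>W < 0\<close>] not_False_eq_True)
    with \<open>0 < a \<and> a < 1\<close> show ?thesis using a(3) by (simp add: ga_sign_patterns_def)
  next
    case 3
    then have "0 < W" by (simp add: W_def zero_less_root_quotient)
    then have "(0 < (1-a)/(1-2*a) * W, 0 < v, 0 < -a/(1-2*a) * W) = (?r, True, ?t)"
      using 3 by (simp only: zero_less_mult_right_iff(1)) simp
    then show ?thesis using a(3) by (simp add: ga_sign_patterns_def)
  qed
qed

lemma ric_system_sign_pattern:
  assumes a: "a \<noteq> 0" "a \<noteq> 1" and S: "ric_system a x0 x1 x2 x3 x4 x5 x6 x7 x8"
  shows "(0 < x0, 0 < x1, 0 < x2) \<in> ga_sign_patterns a"
proof -
  have nz: "x0 \<noteq> 0" "x1 \<noteq> 0" using S unfolding ric_system_def by simp_all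
  define W where "W = (x1 - 4/25) / x1"
  from ric_system_cases[OF a S, folded W_def, case_names same opposite half] show ?thesis
  proof cases
    case same
    then have "x1 = 1/5 \<or> x1 = -4/5" using nz(2) unfolding weight_cubic_one by auto
    then have "0 < W" unfolding W_def zero_less_root_quotient by auto
    then have "(0 < x0, 0 < x2) = (a < 1, 0 < a)"
      unfolding same(1,2) by (simp only: zero_less_mult_right_iff(1)) simp
    then show ?thesis by (auto simp: ga_sign_patterns_def)
  next
    case opposite
    show ?thesis unfolding opposite(2,3) W_def
      by (rule opposite_root_sign_pattern[OF a opposite(1,4) nz(2)])
  next
    case half
    have "0 < x2 \<longleftrightarrow> \<not> 0 < x0" using half(3) nz(1) by auto
    with half(1,2) show ?thesis by (cases "0 < x0") (simp_all add: ga_sign_patterns_def)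
  qed
qed

lemma ric_system_of_root:
  assumes a: "a \<noteq> 0" "a \<noteq> 1"
    and split: "\<rho> + \<tau> = 1" "(1-a)^2 = k * \<rho>^2" "a^2 = k * \<tau>^2"
    and v: "weight_cubic k v = 0" "v \<noteq> 0"
  defines "W \<equiv> (v - 4/25) / v" and "u \<equiv> 2/5 - v"
  shows "ric_system a (\<rho> * W) v (\<tau> * W) u u (u^2 / v) (2/5 - W) (\<tau> * W) (\<rho> * W)"
proof -
  have "0 < a^2" using a(1) by simp
  then have k: "0 < k" and \<tau>: "\<tau> \<noteq> 0" using split(3) by (auto simp: zero_less_mult_iff)
  have \<rho>: "\<rho> \<noteq> 0" using split(2) a(2) by auto
  note bounds = weight_cubic_root_bounds[OF k v(1)]
  have x6: "2/5 - W = (4/25 - 3*v/5) / v" using v(2) by (simp add: W_def field_simps)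
  have nz: "W \<noteq> 0" "u \<noteq> 0" "2/5 - W \<noteq> 0"
    using bounds v(2) unfolding x6 by (auto simp: W_def u_def)
  have "(v * W)^2 = k * u^2 * (v * (2/5 - W))"
    using v(1) v(2) unfolding x6 by (simp add: W_def u_def weight_cubic_def)
  then have "v * (v * W^2) = v * (k * u^2 * (2/5 - W))" by algebra
  then have key: "v * W^2 = k * u^2 * (2/5 - W)" using v(2) by simp
  have lin: "W + u + u^2/v = 3/5" "W + u^2/v - v = 1/5" "u + u^2/v - (2/5 - W) = 1/5"
    using v(2) by (simp_all add: W_def u_def field_simps power2_eq_square)
  have "\<rho> * W + \<tau> * W = W" using split(1) by (metis distrib_right mult_1)
  then have linear: "\<rho> * W + v + \<tau> * W + u + (2/5 - W) = 4/5" "\<rho> * W + u + u^2/v + \<tau> * W = 3/5"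
    "v + u + \<rho> * W - \<rho> * W = 2/5" "\<tau> * W + u^2/v + \<rho> * W - v = 1/5"
    "\<tau> * W + u = u + \<tau> * W" "u + u^2/v - (2/5 - W) = 1/5" "2/5 - W + \<tau> * W + \<rho> * W = 2/5"
    using lin by (simp_all add: u_def)
  have "v * (\<tau> * W) * (\<tau> * W) = a^2 * u * u * (2/5 - W)"
    using key unfolding split(3) by algebra
  moreover have "\<rho> * W * v * (\<rho> * W) = (1-a)^2 * u * u * (2/5 - W)"
    using key unfolding split(2) by algebra
  moreover have "v * (u^2/v) = u * u" using v(2) by (simp add: power2_eq_square)
  ultimately have products: "v * (u^2/v) = u * u"
    "v * (\<tau> * W) * (\<tau> * W) = a^2 * u * u * (2/5 - W)"
    "\<rho> * W * v * (\<rho> * W) = (1-a)^2 * u * u * (2/5 - W)" by blast+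
  have nonzero: "\<rho> * W \<noteq> 0" "\<tau> * W \<noteq> 0" "u^2/v \<noteq> 0" using \<rho> \<tau> nz v(2) by simp_all
  show ?thesis
    unfolding ric_system_def by (intro conjI) (fact nonzero linear products nz v(2))+
qed

lemma ric_system_half:
  assumes "q^2 = 9/250"
  shows "ric_system (1/2) (-q) (4/25) q (6/25) (6/25) (9/25) (2/5) q (-q)"
proof -
  have "q \<noteq> 0" using assms by auto
  with assms show ?thesis unfolding ric_system_def by (simp add: power2_eq_square)
qed

definition solution_sign_patterns :: "real \<Rightarrow> (bool \<times> bool \<times> bool) set" where
  "solution_sign_patterns a = {(0 < x0, 0 < x1, 0 < x2) | x0 x1 x2 x3 x4 x5 x6 x7 x8.
     ric_system a x0 x1 x2 x3 x4 x5 x6 x7 x8}"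

lemma solution_sign_patternsI:
  "ric_system a x0 x1 x2 x3 x4 x5 x6 x7 x8 \<Longrightarrow> (0 < x0, 0 < x1, 0 < x2) \<in> solution_sign_patterns a"
  unfolding solution_sign_patterns_def by blast

lemma root_sign_pattern:
  assumes a: "a \<noteq> 0" "a \<noteq> 1" and split: "\<rho> + \<tau> = 1" "(1-a)^2 = k * \<rho>^2" "a^2 = k * \<tau>^2"
    and v: "weight_cubic k v = 0" "v \<noteq> 0"
  defines "W \<equiv> (v - 4/25) / v"
  shows "0 < W \<Longrightarrow> (0 < \<rho>, 0 < v, 0 < \<tau>) \<in> solution_sign_patterns a"
    and "W < 0 \<Longrightarrow> (\<not> 0 < \<rho>, 0 < v, \<not> 0 < \<tau>) \<in> solution_sign_patterns a"
proof -
  have "\<rho> \<noteq> 0" "\<tau> \<noteq> 0" using a split(2,3) by auto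
  have "(0 < \<rho> * W, 0 < v, 0 < \<tau> * W) \<in> solution_sign_patterns a"
    unfolding W_def by (rule solution_sign_patternsI[OF ric_system_of_root[OF a split v]])
  then show "0 < W \<Longrightarrow> (0 < \<rho>, 0 < v, 0 < \<tau>) \<in> solution_sign_patterns a"
    and "W < 0 \<Longrightarrow> (\<not> 0 < \<rho>, 0 < v, \<not> 0 < \<tau>) \<in> solution_sign_patterns a"
    using \<open>\<rho> \<noteq> 0\<close> \<open>\<tau> \<noteq> 0\<close> by (simp_all add: zero_less_mult_right_iff)
qed

lemma same_sign_patterns:
  assumes a: "a \<noteq> 0" "a \<noteq> 1"
  shows "(a < 1, True, 0 < a) \<in> solution_sign_patterns a" "(a < 1, False, 0 < a) \<in> solution_sign_patterns a"
  using root_sign_pattern(1)[OF a, of "1-a" a 1 "1/5"] root_sign_pattern(1)[OF a, of "1-a" a 1 "-4/5"]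
  by (simp_all add: weight_cubic_one)

lemma half_sign_patterns:
  "(True, True, False) \<in> solution_sign_patterns (1/2)" "(False, True, True) \<in> solution_sign_patterns (1/2)"
proof -
  define q where "q = sqrt (9/250 :: real)"
  have "0 < q" "q^2 = 9/250" "(-q)^2 = 9/250" by (simp_all add: q_def)
  then show "(True, True, False) \<in> solution_sign_patterns (1/2)" "(False, True, True) \<in> solution_sign_patterns (1/2)"
    using solution_sign_patternsI[OF ric_system_half[of "-q"]] solution_sign_patternsI[OF ric_system_half[of q]]
    by simp_all
qed

lemma opposite_sign_patterns:
  assumes a: "a \<noteq> 0" "a \<noteq> 1" "a \<noteq> 1/2"
  defines "r \<equiv> 0 < (1-a)/(1-2*a)" and "t \<equiv> 0 < -a/(1-2*a)"
  shows "(r, True, t) \<in> solution_sign_patterns a"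
    and "(1-2*a)^2 \<le> k_crit \<Longrightarrow> (r, False, t) \<in> solution_sign_patterns a"
    and "0 < a \<Longrightarrow> a < 1 \<Longrightarrow> (\<not> r, True, \<not> t) \<in> solution_sign_patterns a"
proof -
  have d: "1 - 2*a \<noteq> 0" using a(3) by simp
  then have k: "0 < (1-2*a)^2" using zero_less_power2[of "1-2*a"] by blast
  have k1: "(1-2*a)^2 \<noteq> 1" using a(1,2) by (auto simp: power2_eq_square algebra_simps)
  have "(1-a)/(1-2*a) + -a/(1-2*a) = ((1-a) + -a)/(1-2*a)" by (simp only: add_divide_distrib)
  also have "\<dots> = 1" using d by simp
  finally have sum: "(1-a)/(1-2*a) + -a/(1-2*a) = 1" .
  have squares: "(1-a)^2 = (1-2*a)^2 * ((1-a)/(1-2*a))^2" "a^2 = (1-2*a)^2 * (-a/(1-2*a))^2"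
    unfolding power_mult_distrib[symmetric] using d by simp_all
  note root = root_sign_pattern[OF a(1,2) sum squares, folded r_def t_def]
  obtain v where "4/25 < v" "weight_cubic ((1-2*a)^2) v = 0" using weight_cubic_root_large[OF k] by blast
  then show "(r, True, t) \<in> solution_sign_patterns a"
    using root(1)[of v] by (simp add: zero_less_root_quotient)
  show "(r, False, t) \<in> solution_sign_patterns a" if K: "(1-2*a)^2 \<le> k_crit"
  proof -
    obtain v where "v < 0" "weight_cubic ((1-2*a)^2) v = 0" using weight_cubic_root_neg[OF k k1 K] by blast
    then show ?thesis using root(1)[of v] by (simp add: zero_less_root_quotient)
  qed
  show "(\<not> r, True, \<not> t) \<in> solution_sign_patterns a" if "0 < a" "a < 1"
  proof -
    have "(1-2*a)^2 < 1" using that by (simp add: power2_eq_square algebra_simps)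
    then obtain v where "0 < v" "v < 4/25" "weight_cubic ((1-2*a)^2) v = 0"
      using weight_cubic_root_small[OF k] by blast
    then show ?thesis using root(2)[of v] by (simp add: divide_neg_pos)
  qed
qed

lemma ga_sign_patterns_subset:
  assumes "a \<noteq> 0" "a \<noteq> 1"
  shows "ga_sign_patterns a \<subseteq> solution_sign_patterns a"
proof (cases "a = 1/2")
  case True
  then show ?thesis using same_sign_patterns[OF assms] half_sign_patterns
    unfolding True by (simp add: ga_sign_patterns_def)
next
  case False
  then show ?thesis using same_sign_patterns[OF assms] opposite_sign_patterns[OF assms False]
    by (simp add: ga_sign_patterns_def)
qed

lemma solution_sign_patterns_eq:
  assumes "a \<noteq> 0" "a \<noteq> 1"
  shows "solution_sign_patterns a = ga_sign_patterns a"
proof (rule antisym)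
  show "solution_sign_patterns a \<subseteq> ga_sign_patterns a"
    unfolding solution_sign_patterns_def by (auto intro: ric_system_sign_pattern[OF assms])
qed (rule ga_sign_patterns_subset[OF assms])

lemma sig_set_ga:
  assumes a: "a \<noteq> 0" "a \<noteq> 1"
  shows "sig_set 7 (ga_bracket a) = {ga_signature e (0 < x0) (0 < x1) (0 < x2) (0 < x3) (0 < x4) (0 < x6)
    | e x0 x1 x2 x3 x4 x5 x6 x7 x8. ric_system a x0 x1 x2 x3 x4 x5 x6 x7 x8}" (is "_ = ?R")
proof (intro set_eqI iffI)
  fix s assume "s \<in> sig_set 7 (ga_bracket a)"
  then obtain g where s: "s = signature 7 g" and rc: "ric_condition 7 (ga_bracket a) g"
    unfolding sig_set_def by blast
  then have g: "\<forall>i\<in>{1..7}. g i \<noteq> 0" unfolding ric_condition_def by blast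
  show "s \<in> ?R"
    using ric_condition_ga_iff[OF a g] rc unfolding s signature_ga_weights[OF a g] by blast
next
  fix s assume "s \<in> ?R"
  then obtain e x0 x1 x2 x3 x4 x5 x6 x7 x8 where S: "ric_system a x0 x1 x2 x3 x4 x5 x6 x7 x8"
    and s: "s = ga_signature e (0 < x0) (0 < x1) (0 < x2) (0 < x3) (0 < x4) (0 < x6)" by blast
  obtain g where g: "\<forall>i\<in>{1..7}. g i \<noteq> 0" "0 < g 1 \<longleftrightarrow> e"
    and w: "ga_weight a g (1,2,3) = x0" "ga_weight a g (1,3,4) = x1" "ga_weight a g (1,4,5) = x2"
    "ga_weight a g (2,3,5) = x3" "ga_weight a g (1,5,6) = x4" "ga_weight a g (2,4,6) = x5"
    "ga_weight a g (1,6,7) = x6" "ga_weight a g (2,5,7) = x7" "ga_weight a g (3,4,7) = x8"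
    using ga_weights_realised[OF a S] by blast
  have "ric_condition 7 (ga_bracket a) g" using S unfolding ric_condition_ga_iff[OF a g(1)] w .
  moreover have "s = signature 7 g" unfolding s signature_ga_weights[OF a g(1)] w g(2) ..
  ultimately show "s \<in> sig_set 7 (ga_bracket a)" unfolding sig_set_def by blast
qed

lemma sig_set_ga_patterns:
  assumes a: "a \<noteq> 0" "a \<noteq> 1"
  shows "sig_set 7 (ga_bracket a) =
    (\<Union>(b0, b1, b2)\<in>ga_sign_patterns a. range (\<lambda>e. ga_signature e b0 b1 b2 True True b1))"
  unfolding sig_set_ga[OF a] solution_sign_patterns_eq[OF a, symmetric]
proof (intro set_eqI iffI)
  fix s assume "s \<in> {ga_signature e (0 < x0) (0 < x1) (0 < x2) (0 < x3) (0 < x4) (0 < x6)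
    | e x0 x1 x2 x3 x4 x5 x6 x7 x8. ric_system a x0 x1 x2 x3 x4 x5 x6 x7 x8}"
  then obtain e x0 x1 x2 x3 x4 x5 x6 x7 x8 where S: "ric_system a x0 x1 x2 x3 x4 x5 x6 x7 x8"
    and s: "s = ga_signature e (0 < x0) (0 < x1) (0 < x2) (0 < x3) (0 < x4) (0 < x6)" by blast
  then have "s = ga_signature e (0 < x0) (0 < x1) (0 < x2) True True (0 < x1)"
    using ric_system_signs[OF a S] by simp
  with solution_sign_patternsI[OF S]
  show "s \<in> (\<Union>(b0, b1, b2)\<in>solution_sign_patterns a. range (\<lambda>e. ga_signature e b0 b1 b2 True True b1))"
    by blast
next
  fix s assume "s \<in> (\<Union>(b0, b1, b2)\<in>solution_sign_patterns a. range (\<lambda>e. ga_signature e b0 b1 b2 True True b1))"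
  then obtain e x0 x1 x2 x3 x4 x5 x6 x7 x8 where S: "ric_system a x0 x1 x2 x3 x4 x5 x6 x7 x8"
    and s: "s = ga_signature e (0 < x0) (0 < x1) (0 < x2) True True (0 < x1)"
    unfolding solution_sign_patterns_def by blast
  then have "s = ga_signature e (0 < x0) (0 < x1) (0 < x2) (0 < x3) (0 < x4) (0 < x6)"
    using ric_system_signs[OF a S] by simp
  with S show "s \<in> {ga_signature e (0 < x0) (0 < x1) (0 < x2) (0 < x3) (0 < x4) (0 < x6)
    | e x0 x1 x2 x3 x4 x5 x6 x7 x8. ric_system a x0 x1 x2 x3 x4 x5 x6 x7 x8}" by blast
qed

lemma ga_sign_patterns_eq:
  fixes a :: real
  shows "a < 0 \<Longrightarrow> k_crit < (1 - 2*a)^2 \<Longrightarrow>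
      ga_sign_patterns a = {(True, True, False), (True, False, False), (True, True, True)}"
    and "a < 0 \<Longrightarrow> (1 - 2*a)^2 \<le> k_crit \<Longrightarrow>
      ga_sign_patterns a = {(True, True, False), (True, False, False), (True, True, True), (True, False, True)}"
    and "0 < a \<Longrightarrow> a < 1/2 \<Longrightarrow>
      ga_sign_patterns a = {(True, True, True), (True, False, True), (True, True, False), (True, False, False),
        (False, True, True)}"
    and "a = 1/2 \<Longrightarrow>
      ga_sign_patterns a = {(True, True, True), (True, False, True), (True, True, False), (False, True, True)}"
    and "1/2 < a \<Longrightarrow> a < 1 \<Longrightarrow>
      ga_sign_patterns a = {(True, True, True), (True, False, True), (False, True, True), (False, False, True),
        (True, True, False)}"
    and "1 < a \<Longrightarrow> (1 - 2*a)^2 \<le> k_crit \<Longrightarrow>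
      ga_sign_patterns a = {(False, True, True), (False, False, True), (True, True, True), (True, False, True)}"
    and "1 < a \<Longrightarrow> k_crit < (1 - 2*a)^2 \<Longrightarrow>
      ga_sign_patterns a = {(False, True, True), (False, False, True), (True, True, True)}"
proof -
  have small: "(1 - 2*a)^2 \<le> k_crit" if "0 < a" "a < 1"
  proof -
    have "(1 - 2*a)^2 < 1" using that by (simp add: power2_eq_square algebra_simps)
    then show ?thesis using k_crit_gt_1 by simp
  qed
  note simps = ga_sign_patterns_def zero_less_divide_iff divide_less_0_iff insert_commute
  show "a < 0 \<Longrightarrow> k_crit < (1 - 2*a)^2 \<Longrightarrow> ga_sign_patterns a =
      {(True, True, False), (True, False, False), (True, True, True)}"
    and "a < 0 \<Longrightarrow> (1 - 2*a)^2 \<le> k_crit \<Longrightarrow> ga_sign_patterns a =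
      {(True, True, False), (True, False, False), (True, True, True), (True, False, True)}"
    and "1 < a \<Longrightarrow> (1 - 2*a)^2 \<le> k_crit \<Longrightarrow> ga_sign_patterns a =
      {(False, True, True), (False, False, True), (True, True, True), (True, False, True)}"
    and "1 < a \<Longrightarrow> k_crit < (1 - 2*a)^2 \<Longrightarrow> ga_sign_patterns a =
      {(False, True, True), (False, False, True), (True, True, True)}"
    by (simp_all add: simps)
  show "0 < a \<Longrightarrow> a < 1/2 \<Longrightarrow> ga_sign_patterns a = {(True, True, True), (True, False, True),
      (True, True, False), (True, False, False), (False, True, True)}"
    and "1/2 < a \<Longrightarrow> a < 1 \<Longrightarrow> ga_sign_patterns a = {(True, True, True), (True, False, True),
      (False, True, True), (False, False, True), (True, True, False)}"
    using small by (simp_all add: simps)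
  show "a = 1/2 \<Longrightarrow>
      ga_sign_patterns a = {(True, True, True), (True, False, True), (True, True, False), (False, True, True)}"
    by (simp add: simps)
qed

lemma beta_interval_iff_k_crit:
  fixes a :: real
  shows "(1/2 - sqrt (123 * sqrt 41 - 767) / 8 \<le> a \<and> a \<le> 1/2 + sqrt (123 * sqrt 41 - 767) / 8)
     \<longleftrightarrow> (1 - 2*a)^2 \<le> k_crit"
proof -
  define B where "B = sqrt (123 * sqrt 41 - 767) / 8"
  have pos: "123 * sqrt 41 - 767 \<ge> (0::real)" using sqrt_41_gt by linarith
  then have "B \<ge> 0" unfolding B_def by simp
  have "(2*B)^2 = k_crit" unfolding B_def k_crit_def using pos by (simp add: power_divide)
  have "(1/2 - B \<le> a \<and> a \<le> 1/2 + B) \<longleftrightarrow> \<bar>1 - 2*a\<bar> \<le> \<bar>2*B\<bar>" using \<open>B \<ge> 0\<close> by auto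
  also have "\<dots> \<longleftrightarrow> (1 - 2*a)^2 \<le> (2*B)^2" by (rule abs_le_square_iff)
  finally show ?thesis using \<open>(2*B)^2 = k_crit\<close> unfolding B_def by simp
qed

lemma beta_gt_half: "sqrt (123 * sqrt 41 - 767) / 8 > (1/2::real)"
proof -
  have "123 * sqrt 41 - 767 > (16::real)" using sqrt_41_gt by linarith
  then have "sqrt (123 * sqrt 41 - 767) > sqrt 16" by (simp only: real_sqrt_less_iff)
  then show ?thesis by simp
qed

theorem lemma2p4:
  fixes a :: real
  assumes "a \<noteq> 0" and "a \<noteq> 1"
  defines "\<beta> \<equiv> sqrt (123 * sqrt 41 - 767) / 8"
  defines "S \<equiv> sig_set 7 (ga_bracket a)"
  shows "(a < 1/2 - \<beta> \<longrightarrow>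
           S = {{}, {1,2,4,5,7}, {1,3,4,5}, {1,3,5,7}, {2,3,4}, {4,7}})
       \<and> (1/2 - \<beta> \<le> a \<and> a < 0 \<longrightarrow>
           S = {{}, {1,2,4,5,7}, {1,2,5}, {1,3,4,5}, {1,3,5,7}, {2,3,4}, {2,3,7}, {4,7}})
       \<and> (0 < a \<and> a < 1/2 \<longrightarrow>
           S = {{}, {1,2,4,5,7}, {1,2,5}, {1,4,6}, {1,3,4,5}, {1,3,5,7}, {2,3,4}, {2,3,7},
                {3,4,5,6,7}, {4,7}})
       \<and> (a = 1/2 \<longrightarrow>
           S = {{}, {1,2,4,5,7}, {1,2,5}, {1,3,5,7}, {1,4,6}, {2,3,4}, {2,3,7}, {3,4,5,6,7}})
       \<and> (1/2 < a \<and> a < 1 \<longrightarrow>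
           S = {{}, {1,2,3,4,6,7}, {1,2,4,5,7}, {1,2,5}, {1,3,5,7}, {1,4,6}, {2,3,4}, {2,3,7},
                {2,4,5,6}, {3,4,5,6,7}})
       \<and> (1 < a \<and> a \<le> 1/2 + \<beta> \<longrightarrow>
           S = {{}, {1,2,3,4,6,7}, {1,2,5}, {1,3,5,7}, {1,4,6}, {2,3,7}, {2,4,5,6}, {3,4,5,6,7}})
       \<and> (1/2 + \<beta> < a \<longrightarrow>
           S = {{}, {1,2,3,4,6,7}, {1,3,5,7}, {1,4,6}, {2,4,5,6}, {3,4,5,6,7}})"
proof -
  have K: "(1/2 - \<beta> \<le> a \<and> a \<le> 1/2 + \<beta>) \<longleftrightarrow> (1 - 2*a)^2 \<le> k_crit"
    unfolding \<beta>_def by (rule beta_interval_iff_k_crit)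
  have "1/2 < \<beta>" unfolding \<beta>_def by (rule beta_gt_half)
  note patterns = ga_sign_patterns_eq
  note eval = S_def sig_set_ga_patterns[OF assms(1,2)] ga_signature_def signature_of_signs_def
    UNIV_bool insert_commute
  show ?thesis
  proof (intro conjI impI)
    assume "a < 1/2 - \<beta>"
    with K \<open>1/2 < \<beta>\<close> have "a < 0" "k_crit < (1 - 2*a)^2" by auto
    then show "S = {{}, {1,2,4,5,7}, {1,3,4,5}, {1,3,5,7}, {2,3,4}, {4,7}}"
      by (simp add: eval patterns(1))
  next
    assume "1/2 - \<beta> \<le> a \<and> a < 0"
    with K have "a < 0" "(1 - 2*a)^2 \<le> k_crit" by auto
    then show "S = {{}, {1,2,4,5,7}, {1,2,5}, {1,3,4,5}, {1,3,5,7}, {2,3,4}, {2,3,7}, {4,7}}"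
      by (simp add: eval patterns(2))
  next
    assume "0 < a \<and> a < 1/2"
    then show "S = {{}, {1,2,4,5,7}, {1,2,5}, {1,4,6}, {1,3,4,5}, {1,3,5,7}, {2,3,4}, {2,3,7},
      {3,4,5,6,7}, {4,7}}"
      by (simp add: eval patterns(3))
  next
    assume "a = 1/2"
    then show "S = {{}, {1,2,4,5,7}, {1,2,5}, {1,3,5,7}, {1,4,6}, {2,3,4}, {2,3,7}, {3,4,5,6,7}}"
      by (simp add: eval patterns(4)[OF \<open>a = 1/2\<close>])
  next
    assume "1/2 < a \<and> a < 1"
    then show "S = {{}, {1,2,3,4,6,7}, {1,2,4,5,7}, {1,2,5}, {1,3,5,7}, {1,4,6}, {2,3,4}, {2,3,7},
      {2,4,5,6}, {3,4,5,6,7}}"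
      by (simp add: eval patterns(5))
  next
    assume "1 < a \<and> a \<le> 1/2 + \<beta>"
    with K \<open>1/2 < \<beta>\<close> have "1 < a" "(1 - 2*a)^2 \<le> k_crit" by auto
    then show "S = {{}, {1,2,3,4,6,7}, {1,2,5}, {1,3,5,7}, {1,4,6}, {2,3,7}, {2,4,5,6}, {3,4,5,6,7}}"
      by (simp add: eval patterns(6))
  next
    assume "1/2 + \<beta> < a"
    with K \<open>1/2 < \<beta>\<close> have "1 < a" "k_crit < (1 - 2*a)^2" by auto
    then show "S = {{}, {1,2,3,4,6,7}, {1,3,5,7}, {1,4,6}, {2,4,5,6}, {3,4,5,6,7}}"
      by (simp add: eval patterns(7))
  qed
qed

end
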